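(* Let $r\ge 2$, let $H$ be a digraph (possibly with loops), let $D$ be an $H$-colored $r$-partite tournament, let $k \geq 5$, and let $(u,v)$ be an arc of $C_{H}^{k-1}(D)$. If $(u,v)$ is an asymmetric arc of $C_{H}^{k-1}(D)$ (i.e., $(v,u)\notin A(C_{H}^{k-1}(D))$), then $d_{D}(u,v) \leq 2$.
   Context: All digraphs are finite. An $r$-partite tournament is a digraph whose vertex set is partitioned into $r$ disjoint independent sets such that every two vertices in different classes are joined by exactly one arc (an asymmetric arc). $d_D(u,v)$ is the length of a shortest directed $uv$-path in $D$. $D$ has no loops and comes with a map $\rho: A(D)\to V(H)$. For a walk $W=(x_0,\ldots,x_n)$ in $D$, there is an obstruction on $x_i$ if $(\rho(x_{i-1},x_i),\rho(x_i,x_{i+1})) \notin A(H)$; for an open walk this is considered at internal vertices $x_i$, $1\le i\le n-1$, for a closed walk at all $i\in\{0,\ldots,n-1\}$ with indices modulo $n$. $O_H(W)$ is the set of indices with an obstruction; the $H$-length is $l_H(W)=|O_H(W)|+1$ for open $W$ and $|O_H(W)|$ for closed $W$. The $(k-1,H)$-closure $C_H^{k-1}(D)$ is the digraph on $V(D)$ in which $(x,y)$ is an arc iff there is a directed $xy$-path in $D$ of $H$-length at most $k-1$. *)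

theory Defs
  imports Main "HOL-Library.Extended_Nat"
begin

definition digraph :: "'a set \<Rightarrow> ('a \<times> 'a) set \<Rightarrow> bool" where
  "digraph V A \<longleftrightarrow> finite V \<and> A \<subseteq> V \<times> V"

definition r_partite_tournament :: "nat \<Rightarrow> 'a set \<Rightarrow> ('a \<times> 'a) set \<Rightarrow> bool" where
  "r_partite_tournament r V A \<longleftrightarrow> digraph V A \<and>
     (\<exists>P :: nat \<Rightarrow> 'a set.
        (\<forall>i<r. P i \<noteq> {}) \<and>
        (\<forall>i<r. \<forall>j<r. i \<noteq> j \<longrightarrow> P i \<inter> P j = {}) \<and>
        (\<Union>i<r. P i) = V \<and>
        (\<forall>i<r. \<forall>x\<in>P i. \<forall>y\<in>P i. (x, y) \<notin> A) \<and>
        (\<forall>i<r. \<forall>j<r. i \<noteq> j \<longrightarrow> (\<forall>x\<in>P i. \<forall>y\<in>P j.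
            ((x, y) \<in> A \<longleftrightarrow> (y, x) \<notin> A))))"

definition H_colored :: "'a set \<Rightarrow> ('a \<times> 'a) set \<Rightarrow> 'c set \<Rightarrow> ('c \<times> 'c) set
    \<Rightarrow> ('a \<times> 'a \<Rightarrow> 'c) \<Rightarrow> bool" where
  "H_colored V A VH AH \<rho> \<longleftrightarrow> digraph V A \<and> digraph VH AH \<and> (\<forall>e\<in>A. \<rho> e \<in> VH)"

(* a directed walk (x_0, ..., x_n), n \<ge> 1, given as the list of its vertices *)
definition dwalk :: "('a \<times> 'a) set \<Rightarrow> 'a list \<Rightarrow> bool" where
  "dwalk A p \<longleftrightarrow> 2 \<le> length p \<and> (\<forall>i. i + 1 < length p \<longrightarrow> (p ! i, p ! (i + 1)) \<in> A)"

definition dpath :: "('a \<times> 'a) set \<Rightarrow> 'a \<Rightarrow> 'a \<Rightarrow> 'a list \<Rightarrow> bool" where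
  "dpath A x y p \<longleftrightarrow> dwalk A p \<and> distinct p \<and> hd p = x \<and> last p = y"

definition obstructions :: "('c \<times> 'c) set \<Rightarrow> ('a \<times> 'a \<Rightarrow> 'c) \<Rightarrow> 'a list \<Rightarrow> nat set" where
  "obstructions AH \<rho> p = {i. 1 \<le> i \<and> i + 1 < length p \<and>
      (\<rho> (p ! (i - 1), p ! i), \<rho> (p ! i, p ! (i + 1))) \<notin> AH}"

definition H_length :: "('c \<times> 'c) set \<Rightarrow> ('a \<times> 'a \<Rightarrow> 'c) \<Rightarrow> 'a list \<Rightarrow> nat" where
  "H_length AH \<rho> p = card (obstructions AH \<rho> p) + 1"

definition closure_arcs :: "'a set \<Rightarrow> ('a \<times> 'a) set \<Rightarrow> ('c \<times> 'c) set \<Rightarrow> ('a \<times> 'a \<Rightarrow> 'c)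
    \<Rightarrow> nat \<Rightarrow> ('a \<times> 'a) set" where
  "closure_arcs V A AH \<rho> k = {(x, y). x \<in> V \<and> y \<in> V \<and>
      (\<exists>p. dpath A x y p \<and> H_length AH \<rho> p \<le> k - 1)}"

(* d_D(u,v): length of a shortest directed uv-path (\<infinity> if none) *)
definition ddist :: "('a \<times> 'a) set \<Rightarrow> 'a \<Rightarrow> 'a \<Rightarrow> enat" where
  "ddist A u v = (if u = v then 0 else
      Inf {enat (length p - 1) | p. dpath A u v p})"

end

theory Submission
  imports Defs
begin

text \<open>
  The \<open>H\<close>-length of a path never exceeds its number of arcs, so for \<open>k \<ge> 5\<close> asymmetry of
  \<open>(u, v)\<close> in the closure forbids every \<open>vu\<close>-path with at most four arcs. Take a shortest
  \<open>uv\<close>-path \<open>(u, x\<^sub>1, x\<^sub>2, x\<^sub>3, \<dots>, v)\<close> and suppose it has at least three arcs. Minimality forbids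
  all forward chords, and in a multipartite tournament nonadjacent vertices lie in a common part.
  Hence \<open>u\<close> and \<open>v\<close> share a part, \<open>(v, x\<^sub>1)\<close> is an arc, and either \<open>(v, x\<^sub>1, x\<^sub>2, u)\<close> is a path
  or \<open>x\<^sub>2\<close> lies in the part of \<open>u\<close> and \<open>(v, x\<^sub>1, x\<^sub>2, x\<^sub>3, u)\<close> is one. Neither \<open>r \<ge> 2\<close> nor the
  colouring plays any further role.
\<close>

lemma dwalk_iff_successively:
  "dwalk A p \<longleftrightarrow> 2 \<le> length p \<and> successively (\<lambda>x y. (x, y) \<in> A) p"
  unfolding dwalk_def successively_conv_nth by simp

lemma successively_take_drop:
  assumes "successively P xs"
  shows "successively P (take n xs)" and "successively P (drop n xs)"
  using assms successively_append_iff[of P "take n xs" "drop n xs"] by simp_all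

lemma dwalk_set_subset:
  assumes "A \<subseteq> V \<times> V" and "dwalk A p"
  shows "set p \<subseteq> V"
proof
  fix x
  assume "x \<in> set p"
  then obtain i where i: "i < length p" "p ! i = x"
    by (auto simp: in_set_conv_nth)
  show "x \<in> V"
  proof (cases "i + 1 < length p")
    case True
    then have "(p ! i, p ! (i + 1)) \<in> A"
      using assms(2) unfolding dwalk_def by blast
    with assms(1) i show ?thesis by auto
  next
    case False
    with i assms(2) have "i = (i - 1) + 1" and "(i - 1) + 1 < length p"
      unfolding dwalk_def by auto
    then have "(p ! (i - 1), p ! i) \<in> A"
      using assms(2) unfolding dwalk_def by metis
    with assms(1) i show ?thesis by auto
  qed
qed

lemma dpath_shortcut:
  assumes "dpath A x y p" and "i < j" and "j < length p" and "(p ! i, p ! j) \<in> A"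
  shows "dpath A x y (take (Suc i) p @ drop j p)"
proof -
  have walk: "successively (\<lambda>x y. (x, y) \<in> A) p" and "distinct p" "hd p = x" "last p = y"
    using assms(1) unfolding dpath_def dwalk_iff_successively by simp_all
  have "last (take (Suc i) p) = p ! i"
    using assms(2,3) by (subst last_conv_nth) auto
  then have "successively (\<lambda>x y. (x, y) \<in> A) (take (Suc i) p @ drop j p)"
    using successively_take_drop[OF walk] assms(2-4)
    by (simp add: successively_append_iff hd_drop_conv_nth)
  moreover have "distinct (take (Suc i) p @ drop j p)"
    using \<open>distinct p\<close> assms(2) set_take_disj_set_drop_if_distinct[of p "Suc i" j] by simp
  ultimately show ?thesis
    using assms(2,3) \<open>hd p = x\<close> \<open>last p = y\<close>
    unfolding dpath_def dwalk_iff_successively by (auto simp: hd_append)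
qed

lemma shortest_dpath_no_chord:
  assumes "dpath A x y p" and "\<And>q. dpath A x y q \<Longrightarrow> length p \<le> length q"
    and "Suc i < j" and "j < length p"
  shows "(p ! i, p ! j) \<notin> A"
proof
  assume "(p ! i, p ! j) \<in> A"
  then have "dpath A x y (take (Suc i) p @ drop j p)"
    using assms(1,3,4) by (intro dpath_shortcut) simp_all
  with assms(2) have "length p \<le> length (take (Suc i) p @ drop j p)" .
  with assms(3,4) show False by simp
qed

lemma H_length_le_arcs:
  assumes "2 \<le> length p"
  shows "H_length AH \<rho> p \<le> length p - 1"
proof -
  have "obstructions AH \<rho> p \<subseteq> {1..<length p - 1}"
    unfolding obstructions_def by auto
  then have "card (obstructions AH \<rho> p) \<le> card {1..<length p - 1}"
    by (intro card_mono) simp_all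
  with assms show ?thesis
    unfolding H_length_def by simp
qed

lemma dpath_in_closure_arcs:
  assumes "x \<in> V" and "y \<in> V" and "dpath A x y p" and "length p \<le> k"
  shows "(x, y) \<in> closure_arcs V A AH \<rho> k"
proof -
  have "2 \<le> length p"
    using assms(3) unfolding dpath_def dwalk_def by simp
  then have "H_length AH \<rho> p \<le> k - 1"
    using H_length_le_arcs[of p AH \<rho>] assms(4) by linarith
  with assms(1-3) show ?thesis
    unfolding closure_arcs_def by blast
qed

lemma ddist_le_dpath_length:
  assumes "dpath A x y p"
  shows "ddist A x y \<le> enat (length p - 1)"
  unfolding ddist_def using assms by (auto intro!: Inf_lower)

definition nonadjacent :: "('a \<times> 'a) set \<Rightarrow> 'a \<Rightarrow> 'a \<Rightarrow> bool" where
  "nonadjacent A x y \<longleftrightarrow> (x, y) \<notin> A \<and> (y, x) \<notin> A"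

lemma r_partite_tournament_nonadjacent_trans:
  assumes "r_partite_tournament r V A" and "x \<in> V" "y \<in> V" "z \<in> V"
    and "nonadjacent A x y" and "nonadjacent A y z"
  shows "nonadjacent A x z"
proof -
  obtain P :: "nat \<Rightarrow> 'a set" where
    cover: "(\<Union>i<r. P i) = V" and
    independent: "\<forall>i<r. \<forall>x\<in>P i. \<forall>y\<in>P i. (x, y) \<notin> A" and
    tournament: "\<forall>i<r. \<forall>j<r. i \<noteq> j \<longrightarrow> (\<forall>x\<in>P i. \<forall>y\<in>P j. ((x, y) \<in> A \<longleftrightarrow> (y, x) \<notin> A))"
    using assms(1) unfolding r_partite_tournament_def by blast
  have same_part: "i = j"
    if "i < r" "j < r" "a \<in> P i" "b \<in> P j" "nonadjacent A a b" for a b i j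
    using that tournament unfolding nonadjacent_def by blast
  obtain i j l where "i < r" "j < r" "l < r" "x \<in> P i" "y \<in> P j" "z \<in> P l"
    using assms(2-4) cover by blast
  moreover from calculation have "i = j" and "j = l"
    using same_part assms(5,6) by blast+
  ultimately show ?thesis
    using independent unfolding nonadjacent_def by blast
qed

lemma r_partite_tournament_adjacent_of_nonadjacent:
  assumes "r_partite_tournament r V A" and "a \<in> V" "b \<in> V" "c \<in> V"
    and "nonadjacent A a b" and "(a, c) \<in> A"
  shows "(b, c) \<in> A \<or> (c, b) \<in> A"
proof (rule ccontr)
  assume "\<not> ?thesis"
  then have "nonadjacent A b c"
    unfolding nonadjacent_def by blast
  with assms(1-5) have "nonadjacent A a c"
    by (rule r_partite_tournament_nonadjacent_trans)
  with assms(6) show False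
    unfolding nonadjacent_def by simp
qed

lemma shortest_dpath_long_imp_short_converse_dpath:
  assumes tournament: "r_partite_tournament r V A"
    and path: "dpath A u v p" and shortest: "\<And>q. dpath A u v q \<Longrightarrow> length p \<le> length q"
    and long: "4 \<le> length p"
  shows "\<exists>q. dpath A v u q \<and> length q \<le> 5"
proof -
  obtain x\<^sub>1 x\<^sub>2 x\<^sub>3 rest where p: "p = u # x\<^sub>1 # x\<^sub>2 # x\<^sub>3 # rest"
    using path long unfolding dpath_def by (auto simp: numeral_eq_Suc Suc_le_length_iff)
  have no_chord: "(p ! i, p ! j) \<notin> A" if "Suc i < j" "j < length p" for i j
    using shortest_dpath_no_chord[OF path shortest that] .
  have "v = p ! (length p - 1)"
    using path last_conv_nth[of p] unfolding p dpath_def by simp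
  then have "(u, v) \<notin> A" and "(x\<^sub>1, v) \<notin> A"
    using no_chord[of 0 "length p - 1"] no_chord[of 1 "length p - 1"] p by simp_all
  have "(u, x\<^sub>2) \<notin> A" and "(u, x\<^sub>3) \<notin> A"
    using no_chord[of 0 2] no_chord[of 0 3] p by simp_all
  have arcs: "(u, x\<^sub>1) \<in> A" "(x\<^sub>1, x\<^sub>2) \<in> A" "(x\<^sub>2, x\<^sub>3) \<in> A"
    using path p unfolding dpath_def dwalk_iff_successively by simp_all
  have "v = last (x\<^sub>3 # rest)" and "distinct p"
    using path unfolding p dpath_def by simp_all
  then have "v \<in> set (x\<^sub>3 # rest)"
    using last_in_set by blast
  with \<open>distinct p\<close> have distinct: "distinct [v, x\<^sub>1, x\<^sub>2, u]"
    using p by auto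
  have in_V: "u \<in> V" "v \<in> V" "x\<^sub>1 \<in> V" "x\<^sub>2 \<in> V" "x\<^sub>3 \<in> V"
    using dwalk_set_subset[of A V p] tournament path \<open>v \<in> set (x\<^sub>3 # rest)\<close> p
    unfolding r_partite_tournament_def digraph_def dpath_def by auto
  note adjacent = r_partite_tournament_adjacent_of_nonadjacent[OF tournament]
  show ?thesis
  proof (cases "(v, u) \<in> A")
    case True
    then have "dpath A v u [v, u]"
      using distinct unfolding dpath_def dwalk_iff_successively by simp
    then show ?thesis by fastforce
  next
    case False
    with \<open>(u, v) \<notin> A\<close> have "nonadjacent A u v"
      unfolding nonadjacent_def by simp
    then have "(v, x\<^sub>1) \<in> A \<or> (x\<^sub>1, v) \<in> A"
      by (rule adjacent[OF in_V(1-3) _ arcs(1)])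
    with \<open>(x\<^sub>1, v) \<notin> A\<close> have "(v, x\<^sub>1) \<in> A"
      by simp
    show ?thesis
    proof (cases "(x\<^sub>2, u) \<in> A")
      case True
      then have "dpath A v u [v, x\<^sub>1, x\<^sub>2, u]"
        using \<open>(v, x\<^sub>1) \<in> A\<close> arcs distinct unfolding dpath_def dwalk_iff_successively by simp
      then show ?thesis by fastforce
    next
      case False
      with \<open>(u, x\<^sub>2) \<notin> A\<close> have "nonadjacent A x\<^sub>2 u"
        unfolding nonadjacent_def by simp
      then have "(u, x\<^sub>3) \<in> A \<or> (x\<^sub>3, u) \<in> A"
        by (rule adjacent[OF in_V(4,1,5) _ arcs(3)])
      with \<open>(u, x\<^sub>3) \<notin> A\<close> have "(x\<^sub>3, u) \<in> A"
        by simp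
      moreover from this have "x\<^sub>3 \<noteq> v"
        using \<open>(v, u) \<notin> A\<close> by blast
      ultimately have "dpath A v u [v, x\<^sub>1, x\<^sub>2, x\<^sub>3, u]"
        using \<open>(v, x\<^sub>1) \<in> A\<close> arcs distinct \<open>distinct p\<close> p
        unfolding dpath_def dwalk_iff_successively by auto
      then show ?thesis by fastforce
    qed
  qed
qed

theorem lemma24:
  fixes V :: "'a set" and A :: "('a \<times> 'a) set"
    and VH :: "'c set" and AH :: "('c \<times> 'c) set"
    and \<rho> :: "'a \<times> 'a \<Rightarrow> 'c" and r k :: nat and u v :: 'a
  assumes "2 \<le> r"
    and "r_partite_tournament r V A"
    and "H_colored V A VH AH \<rho>"
    and "5 \<le> k"
    and "(u, v) \<in> closure_arcs V A AH \<rho> k"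
    and "(v, u) \<notin> closure_arcs V A AH \<rho> k"
  shows "ddist A u v \<le> 2"
proof -
  obtain p\<^sub>0 where "u \<in> V" "v \<in> V" "dpath A u v p\<^sub>0"
    using assms(5) unfolding closure_arcs_def by blast
  then obtain p where path: "dpath A u v p"
    and shortest: "\<And>q. dpath A u v q \<Longrightarrow> length p \<le> length q"
    using ex_has_least_nat[of "dpath A u v" p\<^sub>0 length] by blast
  have "length p \<le> 3"
  proof (rule ccontr)
    assume "\<not> length p \<le> 3"
    then have "4 \<le> length p" by simp
    then obtain q where "dpath A v u q" and "length q \<le> 5"
      using shortest_dpath_long_imp_short_converse_dpath[OF assms(2) path shortest] by blast
    moreover have "length q \<le> k"
      using \<open>length q \<le> 5\<close> assms(4) by linarith
    ultimately have "(v, u) \<in> closure_arcs V A AH \<rho> k"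
      using \<open>u \<in> V\<close> \<open>v \<in> V\<close> by (intro dpath_in_closure_arcs)
    with assms(6) show False ..
  qed
  have "ddist A u v \<le> enat (length p - 1)"
    using path by (rule ddist_le_dpath_length)
  also have "\<dots> \<le> 2"
    using \<open>length p \<le> 3\<close> by (simp add: numeral_eq_enat)
  finally show ?thesis .
qed

end
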